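(* Consider the Histogram Partitioning algorithm (described in the context) on $N$ distinct keys over $p$ processors, where in each round $j$ each key of $\gamma_j$ is sampled independently with probability $\frac{cp}{|\gamma_j|\log^* p}$ for the constant $c=3\ln 2.5$. Once at most $p/\log^* p$ splitters remain unachieved, with high probability all splitters are achieved after $O(\log^* p)$ further rounds.
   Context: Setting: $N$ distinct keys from a totally ordered set are distributed across $p$ processors, $N/p$ keys per processor. For $\ell\in\{1,\dots,p-1\}$, the target range of splitter $\ell$ is the rank range $[\frac{N\ell}{p},\frac{N\ell}{p}+\frac{N}{p}]$; splitter $\ell$ is achieved in a round if some key with rank in this range is sampled in that round (and stays achieved afterwards). Histogram Partitioning proceeds in rounds; in round $j$, keys are sampled independently from a set $\gamma_j$ ($\gamma_1$ = all keys), and the global ranks of the samples are computed and made known to all processors. For each unachieved splitter $\ell$, $L_j(\ell)$ is the largest key sampled before round $j$ with rank below $\frac{N\ell}{p}$ (or the smallest key) and $U_j(\ell)$ the smallest key sampled before round $j$ with rank above $\frac{N\ell}{p}+\frac{N}{p}$ (or the largest key); $\gamma_j$ is the union over splitters $\ell$ unachieved before round $j$ of the keys between $L_j(\ell)$ and $U_j(\ell)$. $\log^* x=0$ for $x\le1$ and $\log^* x=1+\log^*(\log x)$ for $x>1$. "With high probability" means with probability tending to $1$ as $p\to\infty$. *)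

theory Defs
  imports "HOL-Probability.Probability"
begin

definition log_star :: "real \<Rightarrow> nat" where
  "log_star x = (LEAST k. ((log 2) ^^ k) x \<le> 1)"

(* Keys are identified with their global ranks 1..N.
   Target range of splitter l: ranks in [N l / p, N l / p + N / p]. *)
definition target :: "nat \<Rightarrow> nat \<Rightarrow> nat \<Rightarrow> nat set" where
  "target N p l = {k \<in> {1..N}. real N * real l / real p \<le> real k \<and>
                                real k \<le> real N * real l / real p + real N / real p}"

(* S = set of keys sampled so far *)
definition achieved :: "nat \<Rightarrow> nat \<Rightarrow> nat set \<Rightarrow> nat \<Rightarrow> bool" where
  "achieved N p S l \<longleftrightarrow> (\<exists>k\<in>S. k \<in> target N p l)"

definition unachieved :: "nat \<Rightarrow> nat \<Rightarrow> nat set \<Rightarrow> nat set" where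
  "unachieved N p S = {l \<in> {1..p-1}. \<not> achieved N p S l}"

definition Lo :: "nat \<Rightarrow> nat \<Rightarrow> nat set \<Rightarrow> nat \<Rightarrow> nat" where
  "Lo N p S l = (if \<exists>k\<in>S. real k < real N * real l / real p
                 then Max {k\<in>S. real k < real N * real l / real p} else 1)"

definition Up :: "nat \<Rightarrow> nat \<Rightarrow> nat set \<Rightarrow> nat \<Rightarrow> nat" where
  "Up N p S l = (if \<exists>k\<in>S. real k > real N * real l / real p + real N / real p
                 then Min {k\<in>S. real k > real N * real l / real p + real N / real p} else N)"

definition gamma :: "nat \<Rightarrow> nat \<Rightarrow> nat set \<Rightarrow> nat set" where
  "gamma N p S = (\<Union>l\<in>unachieved N p S. {Lo N p S l .. Up N p S l})"

definition sample :: "nat set \<Rightarrow> real \<Rightarrow> nat set pmf" where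
  "sample A q = map_pmf (\<lambda>f. {x \<in> A. f x}) (Pi_pmf A False (\<lambda>_. bernoulli_pmf q))"

definition hp_const :: real where
  "hp_const = 3 * ln (5/2)"

definition hp_step :: "nat \<Rightarrow> nat \<Rightarrow> nat set \<Rightarrow> nat set pmf" where
  "hp_step N p S =
     map_pmf (\<lambda>T. S \<union> T)
       (sample (gamma N p S)
          (min 1 (hp_const * real p / (real (card (gamma N p S)) * real (log_star (real p))))))"

(* list of states S_0, ..., S_n; S_j = keys sampled in the first j rounds *)
fun hp_traj :: "nat \<Rightarrow> nat \<Rightarrow> nat \<Rightarrow> nat set list pmf" where
  "hp_traj N p 0 = return_pmf [{}]"
| "hp_traj N p (Suc n) =
     bind_pmf (hp_traj N p n) (\<lambda>xs. map_pmf (\<lambda>T. xs @ [T]) (hp_step N p (last xs)))"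

end

theory Submission
  imports Defs "HOL-Real_Asymp.Real_Asymp"
begin

(*
  Progress is measured by the potential R(S) = |gamma S| log* p / N. In a round every key of
  gamma is sampled with rate q, where q N / p = hp_const / R, and a key k stays in the
  interval of an unachieved splitter only if no key between k and its target range is
  sampled. Summing these geometric probabilities gives
  E[R'] <= s exp (-hp_const / R) (2 + 2 R / hp_const), where s = |unachieved| log* p / p <= R.

  While s <= 1 this contracts E[R] by the factor 2 / hp_const <= 5/6, so after log* p rounds
  R <= 1/a, with a = 1 + ln (3 (log* p)^2), except with probability (5/6)^(log* p) log* p a.
  Afterwards, by Markov's inequality, R <= 1/x implies R' <= 2^-x except with probability
  3 2^x exp (-hp_const x) / x <= 1 / (log* p)^2 for x >= a. So after 2 log* p further rounds
  R lies below the inverse of a tower of height log* p + 1, which is below 1/p; but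
  R >= log* p / p as long as some splitter is unachieved. Since the unachieved set only
  shrinks, only the first round with at most p / log* p unachieved splitters matters.
*)

section \<open>Towers and the iterated logarithm\<close>

lemma real_Suc_le_two_power: "real n + 1 \<le> 2 ^ n"
proof -
  have "Suc n \<le> 2 ^ n"
    using less_exp[of n] by (rule Suc_leI)
  then have "real (Suc n) \<le> real (2 ^ n)"
    by (simp only: of_nat_le_iff)
  then show ?thesis
    by simp
qed

lemma less_two_powr_self: "(x::real) < 2 powr x"
proof (cases "x < 0")
  case True
  have "0 < 2 powr x" by simp
  then show ?thesis using True by linarith
next
  case False
  define n where "n = nat \<lfloor>x\<rfloor>"
  have "x < real n + 1" unfolding n_def using False by linarith
  also have "real n + 1 \<le> 2 ^ n"
    by (rule real_Suc_le_two_power)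
  also have "(2::real) ^ n = 2 powr (real n)" by (simp add: powr_realpow)
  also have "\<dots> \<le> 2 powr x" unfolding n_def using False by (intro powr_mono) auto
  finally show ?thesis .
qed

fun tower :: "real \<Rightarrow> nat \<Rightarrow> real" where
  "tower a 0 = a"
| "tower a (Suc t) = 2 powr tower a t"

lemma tower_less_Suc: "tower a t < tower a (Suc t)"
  by (simp add: less_two_powr_self)

lemma tower_mono: "t \<le> t' \<Longrightarrow> tower a t \<le> tower a t'"
  using lift_Suc_mono_le[of "tower a"] tower_less_Suc less_imp_le by metis

lemma tower_ge: "a \<le> tower a t"
  using tower_mono[of 0 t a] by simp

lemma log_star_exists: "\<exists>k. ((log 2) ^^ k) x \<le> 1"
proof -
  have "\<exists>k. ((log 2) ^^ k) x \<le> 1" if "x \<le> real n" for n x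
    using that
  proof (induction n arbitrary: x)
    case (Suc n)
    show ?case
    proof (cases "x \<le> 1")
      case False
      have "log 2 x \<le> log 2 (2 ^ n)"
        using False Suc.prems real_Suc_le_two_power[of n] by (intro log_mono) auto
      then obtain k where "((log 2) ^^ k) (log 2 x) \<le> 1"
        using Suc.IH by (auto simp: log_nat_power)
      then have "((log 2) ^^ Suc k) x \<le> 1"
        by (simp add: funpow_Suc_right del: funpow.simps)
      then show ?thesis ..
    qed (auto intro: exI[of _ 0])
  qed (auto intro: exI[of _ 0])
  then show ?thesis using real_arch_simple by blast
qed

lemma log_star_le_1: "((log 2) ^^ log_star x) x \<le> 1"
  unfolding log_star_def by (rule LeastI_ex) (rule log_star_exists)

lemma log_star_ge_1: "1 < x \<Longrightarrow> 1 \<le> log_star x"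
  using log_star_le_1[of x] by (cases "log_star x") auto

lemma le_tower_log_star:
  assumes "1 \<le> a"
  shows "x \<le> tower a (log_star x)"
proof -
  have "((log 2) ^^ (log_star x - t)) x \<le> tower a t" if "t \<le> log_star x" for t
    using that
  proof (induction t)
    case 0
    then show ?case using log_star_le_1[of x] assms by simp
  next
    case (Suc t)
    define z where "z = ((log 2) ^^ (log_star x - Suc t)) x"
    have "log_star x - t = Suc (log_star x - Suc t)"
      using Suc.prems by simp
    then have "log 2 z \<le> tower a t"
      using Suc by (simp add: z_def)
    have "z \<le> 2 powr tower a t"
    proof (cases "z \<le> 0")
      case False
      then have "z = 2 powr log 2 z" by simp
      also have "\<dots> \<le> 2 powr tower a t" using \<open>log 2 z \<le> tower a t\<close> by simp
      finally show ?thesis .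
    qed (use powr_ge_zero[of 2 "tower a t"] in linarith)
    then show ?case by (simp add: z_def)
  qed
  from this[of "log_star x"] show ?thesis by simp
qed

lemma log_star_tendsto: "filterlim (\<lambda>p::nat. real (log_star (real p))) at_top sequentially"
  unfolding filterlim_at_top
proof
  fix Z :: real
  obtain m :: nat where m: "tower 2 (nat \<lceil>Z\<rceil>) < real m"
    using reals_Archimedean2 by blast
  show "\<forall>\<^sub>F p in sequentially. Z \<le> real (log_star (real p))"
    unfolding eventually_sequentially
  proof (intro exI allI impI)
    fix p assume "m \<le> p"
    then have "tower 2 (nat \<lceil>Z\<rceil>) < tower 2 (log_star (real p))"
      using m le_tower_log_star[of 2 "real p"] by linarith
    then have "nat \<lceil>Z\<rceil> < log_star (real p)"
      using tower_mono by (meson not_le)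
    then show "Z \<le> real (log_star (real p))" by linarith
  qed
qed

lemma hp_const_ge: "12/5 \<le> hp_const"
proof -
  have "exp (4/5::real) ^ 5 = exp 1 ^ 4"
    by (simp flip: exp_of_nat_mult)
  also have "\<dots> \<le> 3 ^ 4"
    using exp_le by (intro power_mono) auto
  also have "\<dots> < (5/2::real) ^ 5"
    by (simp add: power_divide)
  finally have "exp (4/5::real) < 5/2"
    by (rule power_less_imp_less_base) simp
  then have "4/5 < ln (5/2::real)"
    by (metis exp_less_cancel_iff exp_ln zero_less_divide_iff zero_less_numeral)
  then show ?thesis unfolding hp_const_def by simp
qed

lemma one_minus_power_le_exp:
  fixes q :: real
  assumes "q \<le> 1"
  shows "(1 - q) ^ n \<le> exp (- (q * n))"
proof -
  have "(1 - q) ^ n \<le> exp (- q) ^ n"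
    using assms exp_minus_ge[of q] by (intro power_mono) auto
  also have "\<dots> = exp (- (q * n))"
    by (simp flip: exp_of_nat_mult)
  finally show ?thesis .
qed

lemma sum_power_inj_le:
  fixes x :: real
  assumes x: "0 \<le> x" "x < 1" and K: "finite K" "inj_on g K"
  shows "(\<Sum>k\<in>K. x ^ g k) \<le> 1 / (1 - x)"
proof -
  obtain M where M: "g ` K \<subseteq> {..<M}"
    using K by (meson finite_imageI finite_nat_iff_bounded)
  have "(\<Sum>k\<in>K. x ^ g k) = (\<Sum>d\<in>g ` K. x ^ d)"
    using K by (simp add: sum.reindex)
  also have "\<dots> \<le> (\<Sum>d<M. x ^ d)"
    using M x by (intro sum_mono2) auto
  also have "\<dots> = (1 - x ^ M) / (1 - x)"
    using x by (simp add: sum_gp_strict)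
  also have "\<dots> \<le> 1 / (1 - x)"
    using x by (intro divide_right_mono) auto
  finally show ?thesis .
qed

lemma drift_factor_le:
  fixes q r c :: real and n :: nat
  assumes n: "1 \<le> n" and q: "0 < q" "q \<le> 1" and "0 < r" "0 < c" and qn: "q * real n = c / r"
  shows "(1 - q) ^ n * ((real n + 1 + 2 / q) / real n) \<le> exp (- c / r) * (2 + 2 * r / c)"
proof (rule mult_mono)
  show "(1 - q) ^ n \<le> exp (- c / r)"
    using one_minus_power_le_exp[of q n] q qn by simp
  have "(real n + 1 + 2 / q) / real n = 1 + 1 / real n + 2 * r / c"
    using n q qn \<open>0 < r\<close> \<open>0 < c\<close> by (simp add: field_simps)
  also have "\<dots> \<le> 2 + 2 * r / c"
    using n by simp
  finally show "(real n + 1 + 2 / q) / real n \<le> 2 + 2 * r / c" .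
qed (use q n in auto)

lemma exp_drift_le_linear:
  fixes r c :: real
  assumes "0 < r" "0 < c"
  shows "exp (- c / r) * (2 + 2 * r / c) \<le> 2 / c * r"
proof -
  have "(1 + c / r) * exp (- (c / r)) \<le> exp (c / r) * exp (- (c / r))"
    using exp_ge_add_one_self[of "c / r"] by (intro mult_right_mono) auto
  then have "(1 + c / r) * exp (- (c / r)) \<le> 1"
    by (simp add: exp_minus_inverse)
  have "exp (- c / r) * (2 + 2 * r / c) = 2 / c * r * ((1 + c / r) * exp (- (c / r)))"
    using assms by (simp add: field_simps)
  also have "\<dots> \<le> 2 / c * r * 1"
    using assms \<open>(1 + c / r) * exp (- (c / r)) \<le> 1\<close> by (intro mult_left_mono) auto
  finally show ?thesis by simp
qed

lemma exp_drift_le_threshold: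
  fixes r c e :: real
  assumes "0 < r" "r \<le> e" "e \<le> 1" "2 \<le> c"
  shows "r * exp (- c / r) * (2 + 2 * r / c) \<le> 3 * e * exp (- c / e)"
proof -
  have "2 + 2 * r / c \<le> 3"
    using assms by (simp add: field_simps)
  moreover have "exp (- c / r) \<le> exp (- c / e)"
    using assms by (simp add: frac_le)
  ultimately have "r * exp (- c / r) * (2 + 2 * r / c) \<le> e * exp (- c / e) * 3"
    using assms by (intro mult_mono) auto
  then show ?thesis by simp
qed

lemma tower_drift_le:
  fixes x W c :: real
  assumes x: "1 \<le> x" and W: "0 < W" "3 * W \<le> exp x" and c: "1 \<le> c - ln 2"
  shows "3 * (1 / x) * exp (- c / (1 / x)) / (1 / 2 powr x) \<le> 1 / W"
proof -
  have "3 * (1 / x) * exp (- c / (1 / x)) / (1 / 2 powr x) = 3 * exp (- ((c - ln 2) * x)) / x"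
    using x by (simp add: powr_def exp_diff field_simps exp_minus_inverse flip: exp_add)
  also have "\<dots> \<le> 3 * exp (- ((c - ln 2) * x))"
    using x by (simp add: divide_le_eq mult_le_cancel_left1)
  also have "\<dots> \<le> 3 * exp (- x)"
    using x c mult_right_mono[of 1 "c - ln 2" x] by simp
  also have "\<dots> \<le> 1 / W"
    using W by (simp add: exp_minus field_simps)
  finally show ?thesis .
qed

(* The first summand bounds the failure of the contraction phase of log* p rounds,
   the second the failure of the 2 log* p rounds along the tower. *)
definition failure_bound :: "real \<Rightarrow> real" where
  "failure_bound x = (5/6) powr x * x * (1 + ln (3 * x\<^sup>2)) + 2 / x"

lemma failure_bound_tendsto: "(failure_bound \<longlongrightarrow> 0) at_top"
  unfolding failure_bound_def by real_asymp

lemma failure_bound_nonneg: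
  assumes "1 \<le> x"
  shows "0 \<le> failure_bound x"
proof -
  have "1 \<le> x\<^sup>2"
    using assms by (simp add: one_le_power)
  then have "0 \<le> ln (3 * x\<^sup>2)"
    by simp
  then show ?thesis
    using assms unfolding failure_bound_def by (auto intro!: add_nonneg_nonneg mult_nonneg_nonneg)
qed

section \<open>Sampling and iterated Markov kernels\<close>

lemma set_pmf_sample: "finite A \<Longrightarrow> T \<in> set_pmf (sample A q) \<Longrightarrow> T \<subseteq> A"
  unfolding sample_def by auto

lemma emeasure_sample_disjoint:
  assumes A: "finite A" and B: "B \<subseteq> A" and q: "0 \<le> q" "q \<le> 1"
  shows "emeasure (measure_pmf (sample A q)) {T. T \<inter> B = {}} = ennreal ((1 - q) ^ card B)"
proof -
  let ?P = "Pi_pmf A False (\<lambda>_. bernoulli_pmf q)"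
  let ?C = "\<lambda>x. if x \<in> B then {False} else (UNIV :: bool set)"
  have "{f. {x \<in> A. f x} \<inter> B = {}} = Pi A ?C"
    using B by (auto simp: Pi_def)
  then have "measure_pmf.prob (sample A q) {T. T \<inter> B = {}} = measure_pmf.prob ?P (Pi A ?C)"
    unfolding sample_def by simp
  also have "\<dots> = (\<Prod>x\<in>A. measure_pmf.prob (bernoulli_pmf q) (?C x))"
    using A by (rule measure_Pi_pmf_Pi)
  also have "\<dots> = (\<Prod>x\<in>A. if x \<in> B then 1 - q else 1)"
    using q by (intro prod.cong) (auto simp: measure_pmf_single)
  also have "\<dots> = (1 - q) ^ card B"
    using A B by (simp add: prod.If_cases Int_absorb1)
  finally show ?thesis by (simp add: measure_pmf.emeasure_eq_measure)
qed

lemma emeasure_pmf_Markov: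
  fixes f :: "'a \<Rightarrow> real"
  assumes e: "0 < e" and f: "\<And>x. 0 \<le> f x"
  shows "emeasure (measure_pmf M) {x. e \<le> f x} \<le> (\<integral>\<^sup>+x. ennreal (f x) \<partial>M) * ennreal (1 / e)"
proof -
  have "emeasure (measure_pmf M) {x. e \<le> f x} = (\<integral>\<^sup>+x. indicator {x. e \<le> f x} x \<partial>M)"
    by simp
  also have "\<dots> \<le> (\<integral>\<^sup>+x. ennreal (f x) * ennreal (1 / e) \<partial>M)"
  proof (intro nn_integral_mono)
    fix x
    show "indicator {x. e \<le> f x} x \<le> ennreal (f x) * ennreal (1 / e)"
    proof (cases "e \<le> f x")
      case True
      then have "1 \<le> f x * (1 / e)" using e by (simp add: field_simps)
      then show ?thesis using True e f by (simp add: ennreal_mult'[symmetric])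
    qed auto
  qed
  also have "\<dots> = (\<integral>\<^sup>+x. ennreal (f x) \<partial>M) * ennreal (1 / e)"
    by (rule nn_integral_multc) simp
  finally show ?thesis .
qed

lemma emeasure_bind_pmf_threshold:
  fixes f :: "'a \<Rightarrow> 'a pmf"
  assumes e': "0 < e'" and R: "\<And>x. 0 \<le> R x"
    and drift: "\<And>x. x \<in> set_pmf M \<Longrightarrow> R x \<le> e \<Longrightarrow> (\<integral>\<^sup>+y. ennreal (R y) \<partial>f x) \<le> ennreal B"
  shows "emeasure (measure_pmf (bind_pmf M f)) {y. e' < R y}
    \<le> emeasure (measure_pmf M) {x. e < R x} + ennreal (B / e')"
proof -
  have "emeasure (measure_pmf (bind_pmf M f)) {y. e' < R y}
      = (\<integral>\<^sup>+x. emeasure (measure_pmf (f x)) {y. e' < R y} \<partial>M)"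
    by simp
  also have "\<dots> \<le> (\<integral>\<^sup>+x. indicator {x. e < R x} x + ennreal (B / e') \<partial>M)"
  proof (intro nn_integral_mono_AE AE_pmfI)
    fix x assume x: "x \<in> set_pmf M"
    show "emeasure (measure_pmf (f x)) {y. e' < R y} \<le> indicator {x. e < R x} x + ennreal (B / e')"
    proof (cases "e < R x")
      case True
      have "emeasure (measure_pmf (f x)) {y. e' < R y} \<le> 1"
        by (rule measure_pmf.emeasure_le_1)
      then show ?thesis using True by (simp add: add_increasing2)
    next
      case False
      have "emeasure (measure_pmf (f x)) {y. e' < R y} \<le> emeasure (measure_pmf (f x)) {y. e' \<le> R y}"
        by (intro emeasure_mono) auto
      also have "\<dots> \<le> (\<integral>\<^sup>+y. ennreal (R y) \<partial>f x) * ennreal (1 / e')"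
        by (rule emeasure_pmf_Markov[OF e' R])
      also have "\<dots> \<le> ennreal B * ennreal (1 / e')"
        using False x by (intro mult_right_mono drift) auto
      also have "\<dots> \<le> ennreal (B / e')"
        using e' by (cases "0 \<le> B") (simp_all add: ennreal_mult[symmetric] ennreal_neg)
      finally show ?thesis by (simp add: add_increasing)
    qed
  qed
  also have "\<dots> = emeasure (measure_pmf M) {x. e < R x} + ennreal (B / e')"
    by (subst nn_integral_add) auto
  finally show ?thesis .
qed

fun iterate_pmf :: "('a \<Rightarrow> 'a pmf) \<Rightarrow> 'a \<Rightarrow> nat \<Rightarrow> 'a pmf" where
  "iterate_pmf f x 0 = return_pmf x"
| "iterate_pmf f x (Suc t) = bind_pmf (iterate_pmf f x t) f"

lemma iterate_pmf_Suc_first: "iterate_pmf f x (Suc t) = bind_pmf (f x) (\<lambda>y. iterate_pmf f y t)"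
proof (induction t)
  case 0
  show ?case by (simp add: bind_return_pmf bind_return_pmf')
next
  case (Suc t)
  have "iterate_pmf f x (Suc (Suc t)) = bind_pmf (bind_pmf (f x) (\<lambda>y. iterate_pmf f y t)) f"
    by (simp only: iterate_pmf.simps(2)[of f x "Suc t"] Suc.IH)
  also have "\<dots> = bind_pmf (f x) (\<lambda>y. iterate_pmf f y (Suc t))"
    by (simp add: bind_assoc_pmf)
  finally show ?case .
qed

fun trajectory_pmf :: "('a \<Rightarrow> 'a pmf) \<Rightarrow> 'a \<Rightarrow> nat \<Rightarrow> 'a list pmf" where
  "trajectory_pmf f x 0 = return_pmf [x]"
| "trajectory_pmf f x (Suc n) =
     bind_pmf (trajectory_pmf f x n) (\<lambda>xs. map_pmf (\<lambda>y. xs @ [y]) (f (last xs)))"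

lemma set_pmf_trajectory_pmf:
  "xs \<in> set_pmf (trajectory_pmf f x n) \<Longrightarrow> length xs = Suc n \<and> xs ! 0 = x"
  by (induction n arbitrary: xs) (auto simp: nth_append)

lemma trajectory_pmf_Suc_first:
  "trajectory_pmf f x (Suc n) = bind_pmf (f x) (\<lambda>y. map_pmf ((#) x) (trajectory_pmf f y n))"
proof (induction n)
  case 0
  show ?case by (simp add: bind_return_pmf map_pmf_def)
next
  case (Suc n)
  define g where "g xs = map_pmf (\<lambda>y. xs @ [y]) (f (last xs))" for xs
  have "trajectory_pmf f x (Suc (Suc n)) = bind_pmf (f x) (\<lambda>y. bind_pmf (map_pmf ((#) x) (trajectory_pmf f y n)) g)"
    unfolding trajectory_pmf.simps(2)[of f x "Suc n"] Suc.IH g_def by (simp add: bind_assoc_pmf)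
  also have "\<dots> = bind_pmf (f x) (\<lambda>y. bind_pmf (trajectory_pmf f y n) (\<lambda>ys. map_pmf ((#) x) (g ys)))"
    unfolding bind_map_pmf
  proof (intro bind_pmf_cong refl)
    fix y ys assume "ys \<in> set_pmf (trajectory_pmf f y n)"
    then have "ys \<noteq> []" using set_pmf_trajectory_pmf[of ys f y n] by auto
    then show "g (x # ys) = map_pmf ((#) x) (g ys)" unfolding g_def by (simp add: map_pmf_comp)
  qed
  also have "\<dots> = bind_pmf (f x) (\<lambda>y. map_pmf ((#) x) (trajectory_pmf f y (Suc n)))"
    unfolding g_def by (simp add: map_bind_pmf)
  finally show ?case .
qed

lemma map_pmf_nth_trajectory_pmf:
  "k \<le> n \<Longrightarrow> map_pmf (\<lambda>xs. xs ! k) (trajectory_pmf f x n) = iterate_pmf f x k"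
proof (induction k arbitrary: x n)
  case 0
  have "map_pmf (\<lambda>xs. xs ! 0) (trajectory_pmf f x n) = map_pmf (\<lambda>_. x) (trajectory_pmf f x n)"
    by (intro map_pmf_cong refl) (simp add: set_pmf_trajectory_pmf)
  then show ?case by simp
next
  case (Suc k)
  then obtain n' where n: "n = Suc n'" and "k \<le> n'" by (cases n) auto
  then show ?case
    by (simp add: trajectory_pmf_Suc_first iterate_pmf_Suc_first map_bind_pmf map_pmf_comp Suc.IH
             del: trajectory_pmf.simps iterate_pmf.simps)
qed

lemma trajectory_pmf_step:
  "xs \<in> set_pmf (trajectory_pmf f x n) \<Longrightarrow> i < n \<Longrightarrow> xs ! Suc i \<in> set_pmf (f (xs ! i))"
proof (induction i arbitrary: x n xs)
  case 0
  then obtain n' where "n = Suc n'" by (cases n) auto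
  with 0 show ?case
    by (auto simp: trajectory_pmf_Suc_first set_pmf_trajectory_pmf simp del: trajectory_pmf.simps)
next
  case (Suc i)
  then obtain n' where n: "n = Suc n'" by (cases n) auto
  with Suc.prems obtain y ys where "xs = x # ys" "ys \<in> set_pmf (trajectory_pmf f y n')"
    by (auto simp: trajectory_pmf_Suc_first simp del: trajectory_pmf.simps)
  with Suc n show ?case by simp
qed

lemma emeasure_trajectory_pmf_Suc_le:
  assumes "(#) x -` A \<subseteq> A'"
    and "\<And>y. y \<in> set_pmf (f x) \<Longrightarrow> emeasure (measure_pmf (trajectory_pmf f y n)) A' \<le> \<delta>"
  shows "emeasure (measure_pmf (trajectory_pmf f x (Suc n))) A \<le> \<delta>"
proof -
  have "emeasure (measure_pmf (trajectory_pmf f x (Suc n))) A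
      = (\<integral>\<^sup>+y. emeasure (measure_pmf (trajectory_pmf f y n)) ((#) x -` A) \<partial>f x)"
    by (simp add: trajectory_pmf_Suc_first del: trajectory_pmf.simps)
  also have "\<dots> \<le> (\<integral>\<^sup>+y. \<delta> \<partial>f x)"
  proof (intro nn_integral_mono_AE AE_pmfI)
    fix y assume "y \<in> set_pmf (f x)"
    have "emeasure (measure_pmf (trajectory_pmf f y n)) ((#) x -` A)
        \<le> emeasure (measure_pmf (trajectory_pmf f y n)) A'"
      using assms(1) by (rule emeasure_mono) simp
    also have "\<dots> \<le> \<delta>"
      using assms(2) \<open>y \<in> set_pmf (f x)\<close> .
    finally show "emeasure (measure_pmf (trajectory_pmf f y n)) ((#) x -` A) \<le> \<delta>" .
  qed
  also have "\<dots> = \<delta>"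
    by simp
  finally show ?thesis .
qed

lemma hp_traj_eq_trajectory_pmf: "hp_traj N p n = trajectory_pmf (hp_step N p) {} n"
  by (induction n) simp_all

locale pmf_kernel_invariant =
  fixes f :: "'a \<Rightarrow> 'a pmf" and P :: "'a \<Rightarrow> bool"
  assumes invariant: "P x \<Longrightarrow> y \<in> set_pmf (f x) \<Longrightarrow> P y"
begin

lemma set_pmf_iterate_pmf_invariant:
  assumes "P x" and "y \<in> set_pmf (iterate_pmf f x t)"
  shows "P y"
  using assms(2) by (induction t arbitrary: y) (auto intro: invariant \<open>P x\<close>)

lemma nn_integral_iterate_pmf_le:
  assumes "P x"
    and \<rho>: "0 \<le> \<rho>" and R: "\<And>x. 0 \<le> R x"
    and drift: "\<And>y. P y \<Longrightarrow> (\<integral>\<^sup>+z. ennreal (R z) \<partial>f y) \<le> ennreal (\<rho> * R y)"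
  shows "(\<integral>\<^sup>+y. ennreal (R y) \<partial>iterate_pmf f x t) \<le> ennreal (\<rho> ^ t * R x)"
proof (induction t)
  case (Suc t)
  have "(\<integral>\<^sup>+y. ennreal (R y) \<partial>iterate_pmf f x (Suc t))
      = (\<integral>\<^sup>+y. (\<integral>\<^sup>+z. ennreal (R z) \<partial>f y) \<partial>iterate_pmf f x t)"
    by simp
  also have "\<dots> \<le> (\<integral>\<^sup>+y. ennreal \<rho> * ennreal (R y) \<partial>iterate_pmf f x t)"
    using drift set_pmf_iterate_pmf_invariant[OF \<open>P x\<close>] \<rho> R
    by (intro nn_integral_mono_AE AE_pmfI) (simp add: ennreal_mult)
  also have "\<dots> = ennreal \<rho> * (\<integral>\<^sup>+y. ennreal (R y) \<partial>iterate_pmf f x t)"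
    by (rule nn_integral_cmult) simp
  also have "\<dots> \<le> ennreal \<rho> * ennreal (\<rho> ^ t * R x)"
    by (intro mult_left_mono Suc.IH) simp
  also have "\<dots> = ennreal (\<rho> ^ Suc t * R x)"
    using \<rho> R by (simp add: ennreal_mult[symmetric] mult_ac)
  finally show ?case .
qed simp

lemma emeasure_iterate_pmf_thresholds:
  assumes "P x"
    and e: "\<And>t. 0 < e t" and R: "\<And>x. 0 \<le> R x" and B: "\<And>t. 0 \<le> B t"
    and drift: "\<And>t y. P y \<Longrightarrow> R y \<le> e t \<Longrightarrow> (\<integral>\<^sup>+z. ennreal (R z) \<partial>f y) \<le> ennreal (B t)"
  shows "emeasure (measure_pmf (iterate_pmf f x (s + t))) {y. e t < R y}
    \<le> emeasure (measure_pmf (iterate_pmf f x s)) {y. e 0 < R y} + ennreal (\<Sum>i<t. B i / e (Suc i))"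
proof (induction t)
  case (Suc t)
  have "emeasure (measure_pmf (iterate_pmf f x (s + Suc t))) {y. e (Suc t) < R y}
      = emeasure (measure_pmf (bind_pmf (iterate_pmf f x (s + t)) f)) {y. e (Suc t) < R y}"
    by simp
  also have "\<dots> \<le> emeasure (measure_pmf (iterate_pmf f x (s + t))) {y. e t < R y}
      + ennreal (B t / e (Suc t))"
    using set_pmf_iterate_pmf_invariant[OF \<open>P x\<close>]
    by (intro emeasure_bind_pmf_threshold e R drift)
  also have "\<dots> \<le> emeasure (measure_pmf (iterate_pmf f x s)) {y. e 0 < R y}
      + ennreal (\<Sum>i<t. B i / e (Suc i)) + ennreal (B t / e (Suc t))"
    using Suc.IH by (rule add_right_mono)
  also have "\<dots> = emeasure (measure_pmf (iterate_pmf f x s)) {y. e 0 < R y}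
      + ennreal (\<Sum>i<Suc t. B i / e (Suc i))"
  proof -
    have "0 \<le> B i / e (Suc i)" for i
      using B e by (simp add: less_imp_le)
    then show ?thesis
      by (simp add: ennreal_plus sum_nonneg add.assoc)
  qed
  finally show ?case .
qed simp

lemma trajectory_pmf_invariant:
  assumes "P x"
    and xs: "xs \<in> set_pmf (trajectory_pmf f x n)" and "i \<le> n"
  shows "P (xs ! i)"
  using \<open>i \<le> n\<close>
proof (induction i)
  case 0
  then show ?case using set_pmf_trajectory_pmf[OF xs] \<open>P x\<close> by simp
next
  case (Suc i)
  then show ?case using invariant trajectory_pmf_step[OF xs] by auto
qed

lemma trajectory_pmf_persistent:
  assumes persist: "\<And>x y. P x \<Longrightarrow> y \<in> set_pmf (f x) \<Longrightarrow> B y \<Longrightarrow> B x" and "P x"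
    and xs: "xs \<in> set_pmf (trajectory_pmf f x n)" and "i \<le> j" "j \<le> n" and "B (xs ! j)"
  shows "B (xs ! i)"
proof -
  have "B (xs ! (j - d))" if "d \<le> j - i" for d
    using that
  proof (induction d)
    case (Suc d)
    define k where "k = j - Suc d"
    have "Suc k = j - d" "k < n" using Suc.prems \<open>j \<le> n\<close> by (auto simp: k_def)
    then show ?case
      using Suc persist trajectory_pmf_invariant[OF \<open>P x\<close> xs, of k] trajectory_pmf_step[OF xs, of k]
      by (auto simp flip: k_def)
  qed (simp add: \<open>B (xs ! j)\<close>)
  from this[of "j - i"] show ?thesis using \<open>i \<le> j\<close> by simp
qed

lemma emeasure_trajectory_pmf_le_iterate_pmf:
  assumes persist: "\<And>x y. P x \<Longrightarrow> y \<in> set_pmf (f x) \<Longrightarrow> B y \<Longrightarrow> B x" and "P x"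
  shows "emeasure (measure_pmf (trajectory_pmf f x (n + K))) {xs. \<exists>j\<le>n. B (xs ! (j + K))}
           \<le> emeasure (measure_pmf (iterate_pmf f x K)) {y. B y}"
proof -
  let ?M = "trajectory_pmf f x (n + K)"
  have bad_at_K: "B (xs ! K)" if "xs \<in> set_pmf ?M" "j \<le> n" "B (xs ! (j + K))" for xs j
    by (rule trajectory_pmf_persistent[where B = B and x = x and n = "n + K" and j = "j + K"])
      (use persist \<open>P x\<close> that in auto)
  have "emeasure (measure_pmf ?M) {xs. \<exists>j\<le>n. B (xs ! (j + K))}
      = emeasure (measure_pmf ?M) ({xs. \<exists>j\<le>n. B (xs ! (j + K))} \<inter> set_pmf ?M)"
    by (simp add: emeasure_Int_set_pmf)
  also have "\<dots> \<le> emeasure (measure_pmf ?M) {xs. B (xs ! K)}"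
    using bad_at_K by (intro emeasure_mono) auto
  also have "\<dots> = emeasure (measure_pmf (map_pmf (\<lambda>xs. xs ! K) ?M)) {y. B y}"
    by simp
  also have "\<dots> = emeasure (measure_pmf (iterate_pmf f x K)) {y. B y}"
    by (simp add: map_pmf_nth_trajectory_pmf)
  finally show ?thesis .
qed

(* B can only stop holding along a trajectory, so it suffices to look K steps after
   the first index at which G holds. *)
lemma emeasure_trajectory_pmf_first_hit:
  assumes persist: "\<And>x y. P x \<Longrightarrow> y \<in> set_pmf (f x) \<Longrightarrow> B y \<Longrightarrow> B x"
    and hit: "\<And>x. P x \<Longrightarrow> G x \<Longrightarrow> emeasure (measure_pmf (iterate_pmf f x K)) {y. B y} \<le> \<delta>"
    and "P x"
  shows "emeasure (measure_pmf (trajectory_pmf f x (n + K)))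
           {xs. \<exists>j\<le>n. G (xs ! j) \<and> B (xs ! (j + K))} \<le> \<delta>"
proof -
  define E where "E n = {xs. \<exists>j\<le>n. G (xs ! j) \<and> B (xs ! (j + K))}" for n
  have good_start: "emeasure (measure_pmf (trajectory_pmf f x (n + K))) (E n) \<le> \<delta>"
    if "P x" "G x" for x n
  proof -
    have "emeasure (measure_pmf (trajectory_pmf f x (n + K))) (E n)
        \<le> emeasure (measure_pmf (trajectory_pmf f x (n + K))) {xs. \<exists>j\<le>n. B (xs ! (j + K))}"
      by (intro emeasure_mono) (auto simp: E_def)
    also have "\<dots> \<le> \<delta>"
      using emeasure_trajectory_pmf_le_iterate_pmf[OF persist \<open>P x\<close>] hit[OF that]
      by (rule order_trans)
    finally show ?thesis .
  qed
  have "emeasure (measure_pmf (trajectory_pmf f x (n + K))) (E n) \<le> \<delta>"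
    using \<open>P x\<close>
  proof (induction n arbitrary: x)
    case 0
    show ?case
    proof (cases "G x")
      case False
      let ?M = "trajectory_pmf f x (0 + K)"
      have "E 0 \<inter> set_pmf ?M = {}"
        using False set_pmf_trajectory_pmf[of _ f x] by (auto simp: E_def)
      then have "emeasure (measure_pmf ?M) (E 0) = 0"
        by (metis emeasure_Int_set_pmf emeasure_empty)
      then show ?thesis by simp
    qed (use good_start 0 in blast)
  next
    case (Suc n)
    show ?case
    proof (cases "G x")
      case False
      have "(#) x -` E (Suc n) \<subseteq> E n"
      proof
        fix ys assume "ys \<in> (#) x -` E (Suc n)"
        then obtain j where "j \<le> Suc n" "G ((x # ys) ! j)" "B ((x # ys) ! (j + K))"
          by (auto simp: E_def)
        with False show "ys \<in> E n"
          by (cases j) (auto simp: E_def)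
      qed
      moreover have "emeasure (measure_pmf (trajectory_pmf f y (n + K))) (E n) \<le> \<delta>"
        if "y \<in> set_pmf (f x)" for y
        using Suc.IH invariant[OF Suc.prems that] .
      ultimately show ?thesis
        unfolding add_Suc by (rule emeasure_trajectory_pmf_Suc_le)
    qed (use good_start Suc.prems in blast)
  qed
  then show ?thesis by (simp add: E_def)
qed

end

section \<open>Target ranges and splitter intervals\<close>

locale histogram_partitioning =
  fixes N p w :: nat
  assumes p_ge_2: "2 \<le> p" and w_pos: "0 < w" and N_eq: "N = w * p"
begin

lemma target_range_bounds:
  assumes "l \<in> {1..p-1}"
  shows "1 \<le> w * l" "w * l + w \<le> N"
proof -
  show "1 \<le> w * l" using w_pos assms by simp
  have "w * l + w = w * (l + 1)" by simp
  also have "\<dots> \<le> w * p" using assms by (intro mult_left_mono) auto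
  finally show "w * l + w \<le> N" by (simp add: N_eq)
qed

lemma real_splitter_rank: "real N * real l / real p = real (w * l)"
  using p_ge_2 by (simp add: N_eq)

lemma real_range_width: "real N / real p = real w"
  using p_ge_2 by (simp add: N_eq)

lemma target_eq:
  assumes "l \<in> {1..p-1}"
  shows "target N p l = {w * l .. w * l + w}"
proof -
  have "target N p l = {k \<in> {1..N}. w * l \<le> k \<and> k \<le> w * l + w}"
    unfolding target_def real_splitter_rank real_range_width of_nat_add[symmetric] of_nat_le_iff ..
  also have "\<dots> = {w * l .. w * l + w}"
    using target_range_bounds[OF assms] by (auto simp del: One_nat_def)
  finally show ?thesis .
qed

lemma unachieved_iff:
  "l \<in> unachieved N p S \<longleftrightarrow> l \<in> {1..p-1} \<and> (\<forall>k\<in>S. k \<notin> {w * l .. w * l + w})"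
  unfolding unachieved_def achieved_def by (auto simp: target_eq)

lemma unachieved_antimono: "S \<subseteq> S' \<Longrightarrow> unachieved N p S' \<subseteq> unachieved N p S"
  unfolding unachieved_def achieved_def by auto

lemma finite_unachieved [simp]: "finite (unachieved N p S)"
  unfolding unachieved_def by simp

lemma Lo_eq: "Lo N p S l = (if \<exists>k\<in>S. k < w * l then Max {k\<in>S. k < w * l} else 1)"
  unfolding Lo_def real_splitter_rank by (simp only: of_nat_less_iff)

lemma Up_eq: "Up N p S l = (if \<exists>k\<in>S. w * l + w < k then Min {k\<in>S. w * l + w < k} else N)"
  unfolding Up_def real_splitter_rank real_range_width by (simp only: of_nat_less_iff flip: of_nat_add)

lemma le_Lo:
  assumes "finite S" "k \<in> S" "k < w * l"
  shows "k \<le> Lo N p S l"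
proof -
  have "k \<le> Max {k\<in>S. k < w * l}"
    using assms by (intro Max_ge) auto
  then show ?thesis
    unfolding Lo_eq using assms by auto
qed

lemma Up_le:
  assumes "finite S" "k \<in> S" "w * l + w < k"
  shows "Up N p S l \<le> k"
proof -
  have "Min {k\<in>S. w * l + w < k} \<le> k"
    using assms by (intro Min_le) auto
  then show ?thesis
    unfolding Up_eq using assms by auto
qed

lemma Lo_mem:
  assumes "finite S" "\<exists>k\<in>S. k < w * l"
  shows "Lo N p S l \<in> S" "Lo N p S l < w * l"
proof -
  have "Max {k\<in>S. k < w * l} \<in> {k\<in>S. k < w * l}"
    using assms by (intro Max_in) auto
  then show "Lo N p S l \<in> S" "Lo N p S l < w * l"
    unfolding Lo_eq using assms(2) by auto
qed

lemma Up_mem: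
  assumes "finite S" "\<exists>k\<in>S. w * l + w < k"
  shows "Up N p S l \<in> S" "w * l + w < Up N p S l"
proof -
  have "Min {k\<in>S. w * l + w < k} \<in> {k\<in>S. w * l + w < k}"
    using assms by (intro Min_in) auto
  then show "Up N p S l \<in> S" "w * l + w < Up N p S l"
    unfolding Up_eq using assms(2) by auto
qed

lemma Lo_bounds:
  assumes "S \<subseteq> {1..N}" "l \<in> {1..p-1}"
  shows "1 \<le> Lo N p S l" "Lo N p S l \<le> w * l"
proof (atomize (full), cases "\<exists>k\<in>S. k < w * l")
  case True
  then show "1 \<le> Lo N p S l \<and> Lo N p S l \<le> w * l"
    using Lo_mem[OF finite_subset[OF assms(1)]] assms(1) by fastforce
next
  case False
  then show "1 \<le> Lo N p S l \<and> Lo N p S l \<le> w * l"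
    unfolding Lo_eq using target_range_bounds[OF assms(2)] by auto
qed

lemma Up_bounds:
  assumes "S \<subseteq> {1..N}" "l \<in> {1..p-1}"
  shows "w * l + w \<le> Up N p S l" "Up N p S l \<le> N"
proof (atomize (full), cases "\<exists>k\<in>S. w * l + w < k")
  case True
  then show "w * l + w \<le> Up N p S l \<and> Up N p S l \<le> N"
    using Up_mem[OF finite_subset[OF assms(1)]] assms(1) by fastforce
next
  case False
  then show "w * l + w \<le> Up N p S l \<and> Up N p S l \<le> N"
    unfolding Up_eq using target_range_bounds[OF assms(2)] by auto
qed

lemma Lo_mono:
  assumes "S' \<subseteq> {1..N}" "S \<subseteq> S'" "l \<in> {1..p-1}"
  shows "Lo N p S l \<le> Lo N p S' l"
proof (cases "\<exists>k\<in>S. k < w * l")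
  case True
  have "finite S'" "finite S"
    using assms finite_subset[of _ "{1..N}"] by auto
  then show ?thesis
    using Lo_mem[OF \<open>finite S\<close> True] assms(2) by (intro le_Lo) auto
next
  case False
  then show ?thesis unfolding Lo_eq[of S] using Lo_bounds[OF assms(1,3)] by simp
qed

lemma Up_antimono:
  assumes "S' \<subseteq> {1..N}" "S \<subseteq> S'" "l \<in> {1..p-1}"
  shows "Up N p S' l \<le> Up N p S l"
proof (cases "\<exists>k\<in>S. w * l + w < k")
  case True
  have "finite S'" "finite S"
    using assms finite_subset[of _ "{1..N}"] by auto
  then show ?thesis
    using Up_mem[OF \<open>finite S\<close> True] assms(2) by (intro Up_le) auto
next
  case False
  then show ?thesis unfolding Up_eq[of S] using Up_bounds[OF assms(1,3)] by simp
qed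

lemma gamma_subset:
  assumes "S \<subseteq> {1..N}"
  shows "gamma N p S \<subseteq> {1..N}"
proof
  fix k assume "k \<in> gamma N p S"
  then obtain l where l: "l \<in> unachieved N p S" "k \<in> {Lo N p S l .. Up N p S l}"
    unfolding gamma_def by blast
  then have "l \<in> {1..p-1}"
    by (simp add: unachieved_def)
  then have "1 \<le> Lo N p S l" "Up N p S l \<le> N"
    using Lo_bounds[OF assms] Up_bounds[OF assms] by auto
  then show "k \<in> {1..N}"
    using l(2) by auto
qed

lemma finite_gamma: "S \<subseteq> {1..N} \<Longrightarrow> finite (gamma N p S)"
  using gamma_subset finite_subset by blast

lemma card_gamma_le: "S \<subseteq> {1..N} \<Longrightarrow> card (gamma N p S) \<le> N"
  using card_mono[OF _ gamma_subset] by fastforce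

lemma card_gamma_ge:
  assumes S: "S \<subseteq> {1..N}"
  shows "w * card (unachieved N p S) \<le> card (gamma N p S)"
proof -
  let ?U = "unachieved N p S"
  have sub: "(\<Union>l\<in>?U. {w * l ..< w * l + w}) \<subseteq> gamma N p S"
    unfolding gamma_def using Lo_bounds[OF S] Up_bounds[OF S]
    by (fastforce simp: unachieved_def)
  have "disjoint_family_on (\<lambda>l. {w * l ..< w * l + w}) ?U"
    unfolding disjoint_family_on_def
  proof (intro ballI impI)
    fix i j :: nat assume "i \<noteq> j"
    then have "Suc i \<le> j \<or> Suc j \<le> i"
      by linarith
    then have "w * i + w \<le> w * j \<or> w * j + w \<le> w * i"
      using mult_le_mono2[of "Suc i" j w] mult_le_mono2[of "Suc j" i w] by (auto simp: add.commute)
    then show "{w * i ..< w * i + w} \<inter> {w * j ..< w * j + w} = {}" by auto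
  qed
  then have "card (\<Union>l\<in>?U. {w * l ..< w * l + w}) = w * card ?U"
    by (subst card_UN_disjoint') simp_all
  then show ?thesis
    using card_mono[OF finite_gamma[OF S] sub] by simp
qed

(* After sampling T, key k can only remain in the interval of splitter l if T avoids
   between l k: the keys strictly between k and the target range of l, and that range. *)
definition between :: "nat \<Rightarrow> nat \<Rightarrow> nat set" where
  "between l k = {min (k + 1) (w * l) .. max (k - 1) (w * l + w)}"

lemma card_between: "card (between l k) = w + max 1 ((w * l - k) + (k - (w * l + w)))"
  unfolding between_def by (cases "k < w * l"; cases "w * l + w < k") (auto simp: max_def min_def)

lemma between_subset:
  "a \<le> w * l \<Longrightarrow> w * l + w \<le> b \<Longrightarrow> k \<in> {a..b} \<Longrightarrow> between l k \<subseteq> {a..b}"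
  unfolding between_def by auto

lemma interval_after_sample_subset:
  assumes S: "S \<subseteq> {1..N}" and T: "T \<subseteq> {1..N}" and l: "l \<in> unachieved N p (S \<union> T)"
  shows "{Lo N p (S \<union> T) l .. Up N p (S \<union> T) l}
           \<subseteq> {k \<in> {Lo N p S l .. Up N p S l}. T \<inter> between l k = {}}"
proof
  fix k assume k: "k \<in> {Lo N p (S \<union> T) l .. Up N p (S \<union> T) l}"
  have l1: "l \<in> {1..p-1}" and unhit: "\<forall>x\<in>S \<union> T. x \<notin> {w * l .. w * l + w}"
    using l unfolding unachieved_iff by auto
  have ST: "S \<union> T \<subseteq> {1..N}" and fin: "finite (S \<union> T)"
    using S T finite_subset by auto
  have "k \<in> {Lo N p S l .. Up N p S l}"
    using k Lo_mono[OF ST _ l1, of S] Up_antimono[OF ST _ l1, of S] by auto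
  moreover have "x \<notin> between l k" if "x \<in> T" for x
  proof
    assume x: "x \<in> between l k"
    have "x \<notin> {w * l .. w * l + w}"
      using unhit \<open>x \<in> T\<close> by blast
    then have "x < w * l \<or> w * l + w < x"
      by auto
    then show False
    proof
      assume "x < w * l"
      then have "k < x" using x by (auto simp: between_def)
      moreover have "x \<le> Lo N p (S \<union> T) l" using le_Lo[OF fin] \<open>x \<in> T\<close> \<open>x < w * l\<close> by auto
      ultimately show False using k by auto
    next
      assume "w * l + w < x"
      then have "x < k" using x by (auto simp: between_def)
      moreover have "Up N p (S \<union> T) l \<le> x" using Up_le[OF fin] \<open>x \<in> T\<close> \<open>w * l + w < x\<close> by auto
      ultimately show False using k by auto
    qed
  qed
  ultimately show "k \<in> {k \<in> {Lo N p S l .. Up N p S l}. T \<inter> between l k = {}}"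
    by auto
qed

lemma card_gamma_after_sample_le:
  assumes S: "S \<subseteq> {1..N}" and T: "T \<subseteq> gamma N p S"
  shows "card (gamma N p (S \<union> T))
           \<le> (\<Sum>l\<in>unachieved N p S. card {k \<in> {Lo N p S l .. Up N p S l}. T \<inter> between l k = {}})"
proof -
  let ?C = "\<lambda>l. card {k \<in> {Lo N p S l .. Up N p S l}. T \<inter> between l k = {}}"
  have T': "T \<subseteq> {1..N}"
    using T gamma_subset[OF S] by blast
  have "card (gamma N p (S \<union> T)) \<le> (\<Sum>l\<in>unachieved N p (S \<union> T). card {Lo N p (S \<union> T) l .. Up N p (S \<union> T) l})"
    unfolding gamma_def by (rule card_UN_le) simp
  also have "\<dots> \<le> (\<Sum>l\<in>unachieved N p (S \<union> T). ?C l)"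
    using interval_after_sample_subset[OF S T'] by (intro sum_mono card_mono) auto
  also have "\<dots> \<le> (\<Sum>l\<in>unachieved N p S. ?C l)"
    using unachieved_antimono[of S "S \<union> T"] by (intro sum_mono2) auto
  finally show ?thesis .
qed

lemma power_card_between_le:
  fixes x :: real
  assumes x: "0 \<le> x" "x \<le> 1"
  shows "x ^ card (between l k) \<le> x ^ w * ((if k < w * l then x ^ (w * l - k) else 0)
           + indicator {w * l .. w * l + w} k + (if w * l + w < k then x ^ (k - (w * l + w)) else 0))"
proof (cases "k < w * l")
  case True
  then have "card (between l k) = w + (w * l - k)"
    by (simp add: card_between max_def)
  then have "x ^ card (between l k) = x ^ w * x ^ (w * l - k)"
    by (simp only: power_add)
  then show ?thesis
    using True by (simp add: indicator_def)
next
  case not_below: False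
  show ?thesis
  proof (cases "w * l + w < k")
    case True
    then have "card (between l k) = w + (k - (w * l + w))"
      by (simp add: card_between max_def)
    then have "x ^ card (between l k) = x ^ w * x ^ (k - (w * l + w))"
      by (simp only: power_add)
    then show ?thesis
      using True not_below by (simp add: indicator_def)
  next
    case False
    then have "card (between l k) = w + 1"
      using not_below by (simp add: card_between)
    then show ?thesis
      using x False not_below by (simp add: indicator_def mult_left_le_one_le)
  qed
qed

lemma sum_power_card_between_le:
  assumes q: "0 < q" "q \<le> 1"
  shows "(\<Sum>k\<in>{a..b}. (1 - q) ^ card (between l k)) \<le> (1 - q) ^ w * (real w + 1 + 2 / q)"
proof -
  let ?x = "1 - q" and ?t0 = "w * l" and ?t1 = "w * l + w"
  define below where "below k = (if k < ?t0 then ?x ^ (?t0 - k) else 0)" for k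
  define inside where "inside k = (indicator {?t0..?t1} k :: real)" for k
  define above where "above k = (if ?t1 < k then ?x ^ (k - ?t1) else 0)" for k
  have x: "0 \<le> ?x" "?x < 1" using q by auto
  have "(\<Sum>k\<in>{a..b}. ?x ^ card (between l k))
      \<le> (\<Sum>k\<in>{a..b}. ?x ^ w * (below k + inside k + above k))"
    unfolding below_def inside_def above_def using x by (intro sum_mono power_card_between_le) auto
  also have "\<dots> = ?x ^ w * ((\<Sum>k\<in>{a..b}. below k) + (\<Sum>k\<in>{a..b}. inside k) + (\<Sum>k\<in>{a..b}. above k))"
    by (simp add: sum.distrib flip: sum_distrib_left)
  also have "\<dots> \<le> ?x ^ w * (1 / q + (w + 1) + 1 / q)"
  proof (intro mult_left_mono add_mono)
    have "(\<Sum>k\<in>{a..b}. below k) = (\<Sum>k\<in>{k\<in>{a..b}. k < ?t0}. ?x ^ (?t0 - k))"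
      unfolding below_def by (rule sum.inter_filter[symmetric]) simp
    also have "\<dots> \<le> 1 / (1 - ?x)"
      using x by (intro sum_power_inj_le) (auto simp: inj_on_def)
    finally show "(\<Sum>k\<in>{a..b}. below k) \<le> 1 / q" by simp
    have "(\<Sum>k\<in>{a..b}. inside k) = real (\<Sum>k\<in>{a..b}. indicator {?t0..?t1} k)"
      unfolding inside_def of_nat_sum by (simp add: indicator_def)
    also have "\<dots> = real (card ({a..b} \<inter> {?t0..?t1}))"
      by (simp only: sum_indicator_eq_card[OF finite_atLeastAtMost])
    also have "\<dots> \<le> real (card {?t0..?t1})"
      by (simp only: of_nat_le_iff) (intro card_mono; auto)
    finally show "(\<Sum>k\<in>{a..b}. inside k) \<le> w + 1" by simp
    have "(\<Sum>k\<in>{a..b}. above k) = (\<Sum>k\<in>{k\<in>{a..b}. ?t1 < k}. ?x ^ (k - ?t1))"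
      unfolding above_def by (rule sum.inter_filter[symmetric]) simp
    also have "\<dots> \<le> 1 / (1 - ?x)"
      using x by (intro sum_power_inj_le) (auto simp: inj_on_def)
    finally show "(\<Sum>k\<in>{a..b}. above k) \<le> 1 / q" by simp
  qed (use x in simp)
  finally show ?thesis by (simp add: algebra_simps)
qed

lemma expected_card_gamma_after_sample:
  assumes S: "S \<subseteq> {1..N}" and q: "0 < q" "q \<le> 1"
  shows "(\<integral>\<^sup>+T. of_nat (card (gamma N p (S \<union> T))) \<partial>sample (gamma N p S) q)
           \<le> ennreal (real (card (unachieved N p S)) * ((1 - q) ^ w * (real w + 1 + 2 / q)))"
proof -
  let ?G = "gamma N p S" and ?U = "unachieved N p S"
  let ?I = "\<lambda>l. {Lo N p S l .. Up N p S l}"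
  let ?E = "\<lambda>l k. {T. T \<inter> between l k = {}}"
  have G: "finite ?G"
    using finite_gamma[OF S] .
  have "(\<integral>\<^sup>+T. of_nat (card (gamma N p (S \<union> T))) \<partial>sample ?G q)
      \<le> (\<integral>\<^sup>+T. (\<Sum>l\<in>?U. \<Sum>k\<in>?I l. indicator (?E l k) T) \<partial>sample ?G q)"
  proof (intro nn_integral_mono_AE AE_pmfI)
    fix T assume "T \<in> set_pmf (sample ?G q)"
    then have "card (gamma N p (S \<union> T)) \<le> (\<Sum>l\<in>?U. card {k \<in> ?I l. T \<inter> between l k = {}})"
      by (intro card_gamma_after_sample_le[OF S] set_pmf_sample[OF G])
    also have "\<dots> = (\<Sum>l\<in>?U. \<Sum>k\<in>?I l. if T \<inter> between l k = {} then 1 else 0)"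
      by (simp only: card_eq_sum sum.inter_filter[OF finite_atLeastAtMost])
    finally have "(of_nat (card (gamma N p (S \<union> T))) :: ennreal)
        \<le> of_nat (\<Sum>l\<in>?U. \<Sum>k\<in>?I l. if T \<inter> between l k = {} then 1 else 0)"
      by (rule of_nat_mono)
    also have "\<dots> = (\<Sum>l\<in>?U. \<Sum>k\<in>?I l. indicator (?E l k) T)"
      by (simp add: of_nat_sum indicator_def of_bool_def[symmetric])
    finally show "of_nat (card (gamma N p (S \<union> T))) \<le> (\<Sum>l\<in>?U. \<Sum>k\<in>?I l. indicator (?E l k) T :: ennreal)" .
  qed
  also have "\<dots> = (\<Sum>l\<in>?U. \<integral>\<^sup>+T. (\<Sum>k\<in>?I l. indicator (?E l k) T) \<partial>sample ?G q)"
    by (intro nn_integral_sum) simp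
  also have "\<dots> = (\<Sum>l\<in>?U. \<Sum>k\<in>?I l. emeasure (measure_pmf (sample ?G q)) (?E l k))"
    by (intro sum.cong refl) (subst nn_integral_sum; simp)
  also have "\<dots> = (\<Sum>l\<in>?U. \<Sum>k\<in>?I l. ennreal ((1 - q) ^ card (between l k)))"
  proof (intro sum.cong refl emeasure_sample_disjoint G)
    fix l k assume "l \<in> ?U" "k \<in> ?I l"
    then have "between l k \<subseteq> ?I l"
      using Lo_bounds[OF S] Up_bounds[OF S] by (intro between_subset) (auto simp: unachieved_def)
    also have "?I l \<subseteq> ?G"
      using \<open>l \<in> ?U\<close> unfolding gamma_def by blast
    finally show "between l k \<subseteq> ?G" .
  qed (use q in auto)
  also have "\<dots> = ennreal (\<Sum>l\<in>?U. \<Sum>k\<in>?I l. (1 - q) ^ card (between l k))"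
    using q by (simp add: sum_nonneg)
  also have "\<dots> \<le> ennreal (\<Sum>l\<in>?U. (1 - q) ^ w * (real w + 1 + 2 / q))"
    using q by (intro ennreal_leI sum_mono sum_power_card_between_le)
  finally show ?thesis
    by simp
qed

section \<open>The potential and its drift\<close>

definition L :: nat where "L = log_star (real p)"

lemma L_pos: "1 \<le> L"
  using log_star_ge_1[of "real p"] p_ge_2 unfolding L_def by simp

definition rate :: "nat set \<Rightarrow> real" where
  "rate S = min 1 (hp_const * real p / (real (card (gamma N p S)) * real L))"

lemma hp_step_eq: "hp_step N p S = map_pmf ((\<union>) S) (sample (gamma N p S) (rate S))"
  unfolding hp_step_def rate_def L_def ..

definition potential :: "nat set \<Rightarrow> real" where
  "potential S = real (card (gamma N p S)) * real L / real N"

lemma potential_nonneg: "0 \<le> potential S"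
  unfolding potential_def by simp

lemma real_N_eq: "real N = real w * real p"
  by (simp add: N_eq)

lemma N_pos: "0 < N"
  using w_pos p_ge_2 by (simp add: N_eq)

lemma potential_le_L:
  assumes "S \<subseteq> {1..N}"
  shows "potential S \<le> L"
proof -
  have "real (card (gamma N p S)) * real L \<le> real N * real L"
    using card_gamma_le[OF assms] by (intro mult_right_mono) auto
  then show ?thesis
    using N_pos by (simp add: potential_def divide_le_eq mult.commute)
qed

lemma unachieved_le_potential:
  assumes "S \<subseteq> {1..N}"
  shows "real (card (unachieved N p S)) * real L / real p \<le> potential S"
proof -
  have "real w * real (card (unachieved N p S)) \<le> real (card (gamma N p S))"
    using card_gamma_ge[OF assms] by (simp flip: of_nat_mult)
  then have "real L * (real w * real (card (unachieved N p S))) \<le> real L * real (card (gamma N p S))"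
    by (intro mult_left_mono) auto
  then show ?thesis
    using w_pos p_ge_2 unfolding potential_def real_N_eq by (simp add: field_simps mult_ac)
qed

lemma hp_step_all_achieved: "unachieved N p S = {} \<Longrightarrow> hp_step N p S = return_pmf S"
  by (simp add: hp_step_def gamma_def sample_def map_pmf_def bind_return_pmf)

lemma potential_all_achieved: "unachieved N p S = {} \<Longrightarrow> potential S = 0"
  by (simp add: potential_def gamma_def)

lemma set_pmf_hp_step:
  assumes "S \<subseteq> {1..N}" "S' \<in> set_pmf (hp_step N p S)"
  shows "S \<subseteq> S'" "S' \<subseteq> {1..N}"
proof -
  obtain T where T: "T \<in> set_pmf (sample (gamma N p S) (rate S))" and S': "S' = S \<union> T"
    using assms(2) unfolding hp_step_eq by auto
  have "T \<subseteq> {1..N}"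
    using set_pmf_sample[OF finite_gamma[OF assms(1)] T] gamma_subset[OF assms(1)] by blast
  then show "S \<subseteq> S'" "S' \<subseteq> {1..N}"
    using assms(1) S' by auto
qed

lemma rate_le_1: "rate S \<le> 1"
  by (simp add: rate_def)

lemma card_gamma_pos:
  assumes "S \<subseteq> {1..N}" "unachieved N p S \<noteq> {}"
  shows "1 \<le> card (gamma N p S)"
proof -
  have "1 \<le> w * card (unachieved N p S)"
    using w_pos assms(2) by (simp add: Suc_le_eq card_gt_0_iff)
  then show ?thesis
    using card_gamma_ge[OF assms(1)] by linarith
qed

lemma rate_times_w:
  assumes "S \<subseteq> {1..N}" "unachieved N p S \<noteq> {}" "rate S \<noteq> 1"
  shows "rate S * real w = hp_const / potential S"
proof -
  have "rate S = hp_const * real p / (real (card (gamma N p S)) * real L)"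
    using assms(3) by (simp add: rate_def min_def split: if_splits)
  then show ?thesis
    using card_gamma_pos[OF assms(1,2)] L_pos w_pos p_ge_2
    by (simp add: potential_def real_N_eq field_simps)
qed

lemma expected_potential_hp_step:
  assumes S: "S \<subseteq> {1..N}" and q: "0 < rate S"
  shows "(\<integral>\<^sup>+S'. potential S' \<partial>hp_step N p S)
    \<le> ennreal (real (card (unachieved N p S)) * real L / real p
                 * ((1 - rate S) ^ w * ((real w + 1 + 2 / rate S) / real w)))"
proof -
  let ?G = "gamma N p S" and ?q = "rate S"
  have split: "ennreal (real k * (real L / real N)) = of_nat k * ennreal (real L / real N)" for k
    unfolding ennreal_of_nat_eq_real_of_nat by (subst ennreal_mult[symmetric]) auto
  have "(\<integral>\<^sup>+S'. potential S' \<partial>hp_step N p S)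
      = (\<integral>\<^sup>+T. ennreal (real (card (gamma N p (S \<union> T))) * (real L / real N)) \<partial>sample ?G ?q)"
    by (simp add: hp_step_eq potential_def)
  also have "\<dots> = (\<integral>\<^sup>+T. of_nat (card (gamma N p (S \<union> T))) \<partial>sample ?G ?q) * ennreal (real L / real N)"
    unfolding split by (rule nn_integral_multc) simp
  also have "\<dots> \<le> ennreal (real (card (unachieved N p S)) * ((1 - ?q) ^ w * (real w + 1 + 2 / ?q)))
                   * ennreal (real L / real N)"
    using q rate_le_1 by (intro mult_right_mono expected_card_gamma_after_sample[OF S]) auto
  also have "\<dots> = ennreal (real (card (unachieved N p S)) * real L / real p
                             * ((1 - ?q) ^ w * ((real w + 1 + 2 / ?q) / real w)))"
    using q rate_le_1[of S] w_pos p_ge_2 by (simp add: real_N_eq ennreal_mult[symmetric] field_simps)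
  finally show ?thesis .
qed

lemma expected_potential_step:
  assumes S: "S \<subseteq> {1..N}" and U: "unachieved N p S \<noteq> {}"
  shows "(\<integral>\<^sup>+S'. potential S' \<partial>hp_step N p S)
    \<le> ennreal (real (card (unachieved N p S)) * real L / real p
                 * exp (- hp_const / potential S) * (2 + 2 * potential S / hp_const))"
proof -
  let ?q = "rate S" and ?c = "hp_const"
  have c: "0 < ?c" using hp_const_ge by simp
  have q: "0 < ?q"
    using card_gamma_pos[OF S U] c L_pos p_ge_2 by (auto simp: rate_def)
  have R: "0 < potential S"
    using card_gamma_pos[OF S U] L_pos N_pos by (simp add: potential_def)
  have "(1 - ?q) ^ w * ((real w + 1 + 2 / ?q) / real w) \<le> exp (- ?c / potential S) * (2 + 2 * potential S / ?c)"
  proof (cases "?q = 1")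
    case True
    then show ?thesis using w_pos c R by (simp add: zero_power add_nonneg_nonneg)
  next
    case False
    then show ?thesis
      using w_pos q rate_le_1 c R rate_times_w[OF S U] by (intro drift_factor_le) auto
  qed
  then have "real (card (unachieved N p S)) * real L / real p * ((1 - ?q) ^ w * ((real w + 1 + 2 / ?q) / real w))
      \<le> real (card (unachieved N p S)) * real L / real p * exp (- ?c / potential S) * (2 + 2 * potential S / ?c)"
    unfolding mult.assoc by (rule mult_left_mono) simp
  then show ?thesis
    by (rule order_trans[OF expected_potential_hp_step[OF S q] ennreal_leI])
qed

lemma potential_pos:
  assumes "S \<subseteq> {1..N}" "unachieved N p S \<noteq> {}"
  shows "real L / real p \<le> potential S"
proof -
  have "1 \<le> real (card (unachieved N p S))"
    using assms(2) by (simp add: Suc_le_eq card_gt_0_iff)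
  then have "real L / real p \<le> real (card (unachieved N p S)) * real L / real p"
    using p_ge_2 by (intro divide_right_mono) (auto simp: mult_le_cancel_right1)
  also have "\<dots> \<le> potential S"
    by (rule unachieved_le_potential[OF assms(1)])
  finally show ?thesis .
qed

lemma potential_drift_linear:
  assumes S: "S \<subseteq> {1..N}" and few: "real (card (unachieved N p S)) * real L \<le> real p"
  shows "(\<integral>\<^sup>+S'. potential S' \<partial>hp_step N p S) \<le> ennreal (2 / hp_const * potential S)"
proof (cases "unachieved N p S = {}")
  case True
  then show ?thesis by (simp add: hp_step_all_achieved potential_all_achieved)
next
  case False
  let ?s = "real (card (unachieved N p S)) * real L / real p"
  have c: "0 < hp_const" using hp_const_ge by simp
  have R: "0 < potential S"
  proof -
    have "0 < real L / real p" using L_pos p_ge_2 by simp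
    then show ?thesis using potential_pos[OF S False] by linarith
  qed
  have "?s * (exp (- hp_const / potential S) * (2 + 2 * potential S / hp_const))
      \<le> 1 * (2 / hp_const * potential S)"
  proof (rule mult_mono[OF _ exp_drift_le_linear[OF R c]])
    show "?s \<le> 1"
      using few p_ge_2 by (simp add: field_simps)
    show "0 \<le> exp (- hp_const / potential S) * (2 + 2 * potential S / hp_const)"
      using R c by (simp add: add_nonneg_nonneg)
  qed simp
  then have "?s * exp (- hp_const / potential S) * (2 + 2 * potential S / hp_const)
      \<le> 2 / hp_const * potential S"
    by (simp add: mult.assoc)
  with expected_potential_step[OF S False] show ?thesis
    by (rule order_trans[OF _ ennreal_leI])
qed

lemma potential_drift_threshold:
  assumes S: "S \<subseteq> {1..N}" and e: "potential S \<le> e" "e \<le> 1"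
  shows "(\<integral>\<^sup>+S'. potential S' \<partial>hp_step N p S) \<le> ennreal (3 * e * exp (- hp_const / e))"
proof (cases "unachieved N p S = {}")
  case True
  then show ?thesis by (simp add: hp_step_all_achieved potential_all_achieved)
next
  case False
  let ?s = "real (card (unachieved N p S)) * real L / real p"
  have R: "0 < potential S"
  proof -
    have "0 < real L / real p" using L_pos p_ge_2 by simp
    then show ?thesis using potential_pos[OF S False] by linarith
  qed
  have "?s * exp (- hp_const / potential S) * (2 + 2 * potential S / hp_const)
      \<le> potential S * exp (- hp_const / potential S) * (2 + 2 * potential S / hp_const)"
    using unachieved_le_potential[OF S] hp_const_ge R by (intro mult_right_mono) auto
  also have "\<dots> \<le> 3 * e * exp (- hp_const / e)"
    using R e hp_const_ge by (intro exp_drift_le_threshold) auto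
  finally show ?thesis
    by (rule order_trans[OF expected_potential_step[OF S False] ennreal_leI])
qed

lemma hp_step_invariant: "pmf_kernel_invariant (hp_step N p) (\<lambda>S. S \<subseteq> {1..N})"
  by unfold_locales (rule set_pmf_hp_step)

lemma hp_step_invariant_few_unachieved:
  "pmf_kernel_invariant (hp_step N p)
     (\<lambda>S. S \<subseteq> {1..N} \<and> real (card (unachieved N p S)) * real L \<le> real p)"
proof unfold_locales
  fix S S' assume S: "S \<subseteq> {1..N} \<and> real (card (unachieved N p S)) * real L \<le> real p"
    and S': "S' \<in> set_pmf (hp_step N p S)"
  have "card (unachieved N p S') \<le> card (unachieved N p S)"
    using set_pmf_hp_step[OF _ S'] S by (intro card_mono unachieved_antimono) auto
  then have "real (card (unachieved N p S')) * real L \<le> real (card (unachieved N p S)) * real L"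
    by (intro mult_right_mono) auto
  then show "S' \<subseteq> {1..N} \<and> real (card (unachieved N p S')) * real L \<le> real p"
    using set_pmf_hp_step[OF _ S'] S by auto
qed

section \<open>The two phases\<close>

lemma potential_large_after_L:
  assumes S: "S \<subseteq> {1..N}" and few: "real (card (unachieved N p S)) * real L \<le> real p"
    and a: "0 < a"
  shows "emeasure (measure_pmf (iterate_pmf (hp_step N p) S L)) {S'. 1 / a \<le> potential S'}
           \<le> ennreal ((5/6) ^ L * real L * a)"
proof -
  interpret pmf_kernel_invariant "hp_step N p"
      "\<lambda>S. S \<subseteq> {1..N} \<and> real (card (unachieved N p S)) * real L \<le> real p"
    by (rule hp_step_invariant_few_unachieved)
  have c: "2 / hp_const \<le> 5/6" "0 < hp_const"
    using hp_const_ge by (auto simp: field_simps)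
  have "emeasure (measure_pmf (iterate_pmf (hp_step N p) S L)) {S'. 1 / a \<le> potential S'}
      \<le> (\<integral>\<^sup>+S'. potential S' \<partial>iterate_pmf (hp_step N p) S L) * ennreal (1 / (1 / a))"
    using a by (intro emeasure_pmf_Markov potential_nonneg) simp
  also have "\<dots> \<le> ennreal ((2 / hp_const) ^ L * potential S) * ennreal a"
    using S few c
    by (intro mult_mono nn_integral_iterate_pmf_le potential_drift_linear potential_nonneg) auto
  also have "\<dots> = ennreal ((2 / hp_const) ^ L * potential S * a)"
    using a c potential_nonneg by (simp add: ennreal_mult)
  also have "\<dots> \<le> ennreal ((5/6) ^ L * real L * a)"
    using c potential_le_L[OF S] potential_nonneg a
    by (intro ennreal_leI mult_right_mono mult_mono power_mono) auto
  finally show ?thesis .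
qed

lemma potential_above_tower:
  assumes S: "S \<subseteq> {1..N}" and a: "1 \<le> a" and W: "0 < W" "3 * W \<le> exp a"
  shows "emeasure (measure_pmf (iterate_pmf (hp_step N p) S (s + t))) {S'. 1 / tower a t < potential S'}
    \<le> emeasure (measure_pmf (iterate_pmf (hp_step N p) S s)) {S'. 1 / a < potential S'} + ennreal (t / W)"
proof -
  interpret pmf_kernel_invariant "hp_step N p" "\<lambda>S. S \<subseteq> {1..N}"
    by (rule hp_step_invariant)
  define e where "e t = 1 / tower a t" for t
  have tower_ge_1: "1 \<le> tower a t" for t
    using tower_ge[of a t] a by linarith
  have e: "0 < e t" "e t \<le> 1" for t
    using tower_ge_1[of t] by (auto simp: e_def)
  have "emeasure (measure_pmf (iterate_pmf (hp_step N p) S (s + t))) {S'. e t < potential S'}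
      \<le> emeasure (measure_pmf (iterate_pmf (hp_step N p) S s)) {S'. e 0 < potential S'}
        + ennreal (\<Sum>i<t. 3 * e i * exp (- hp_const / e i) / e (Suc i))"
    using S e potential_nonneg
    by (intro emeasure_iterate_pmf_thresholds potential_drift_threshold) (auto intro: less_imp_le)
  also have "\<dots> \<le> emeasure (measure_pmf (iterate_pmf (hp_step N p) S s)) {S'. e 0 < potential S'}
      + ennreal (t / W)"
  proof (intro add_left_mono ennreal_leI)
    have "(\<Sum>i<t. 3 * e i * exp (- hp_const / e i) / e (Suc i)) \<le> (\<Sum>i<t. 1 / W)"
    proof (intro sum_mono)
      fix i
      have "3 * W \<le> exp (tower a i)"
        using W tower_ge[of a i] by (meson exp_le_cancel_iff order.trans)
      moreover have "1 \<le> hp_const - ln 2"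
        using hp_const_ge ln_le_minus_one[of 2] by simp
      ultimately show "3 * e i * exp (- hp_const / e i) / e (Suc i) \<le> 1 / W"
        using tower_drift_le[OF tower_ge_1] W by (simp add: e_def)
    qed
    then show "(\<Sum>i<t. 3 * e i * exp (- hp_const / e i) / e (Suc i)) \<le> t / W"
      by simp
  qed
  finally show ?thesis
    by (simp add: e_def)
qed

lemma potential_gt_inverse_tower:
  assumes "S \<subseteq> {1..N}" "unachieved N p S \<noteq> {}" "1 \<le> a" "L < t"
  shows "1 / tower a t < potential S"
proof -
  have "real p \<le> tower a L"
    using le_tower_log_star[OF assms(3)] by (simp add: L_def)
  also have "\<dots> < tower a t"
    using tower_less_Suc tower_mono[of "Suc L" t] assms(4) by (meson Suc_leI less_le_trans)
  finally have "1 / tower a t < 1 / real p"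
    using p_ge_2 by (simp add: frac_less2)
  also have "\<dots> \<le> real L / real p"
    using L_pos by (simp add: divide_right_mono)
  also have "\<dots> \<le> potential S"
    using assms(1,2) by (rule potential_pos)
  finally show ?thesis .
qed

lemma all_achieved_within_3L:
  assumes S: "S \<subseteq> {1..N}" and few: "real (card (unachieved N p S)) * real L \<le> real p"
  shows "emeasure (measure_pmf (iterate_pmf (hp_step N p) S (3 * L))) {S'. unachieved N p S' \<noteq> {}}
           \<le> ennreal (failure_bound L)"
proof -
  let ?M = "\<lambda>t. measure_pmf (iterate_pmf (hp_step N p) S t)"
  define W where "W = real L ^ 2"
  define a where "a = 1 + ln (3 * W)"
  have W: "1 \<le> W"
    using L_pos by (simp add: W_def)
  have a: "1 \<le> a" "3 * W \<le> exp a"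
    using W by (auto simp: a_def exp_add)
  have "{S'. unachieved N p S' \<noteq> {}} \<inter> set_pmf (iterate_pmf (hp_step N p) S (L + 2 * L))
      \<subseteq> {S'. 1 / tower a (2 * L) < potential S'}"
  proof
    fix S' assume S': "S' \<in> {S'. unachieved N p S' \<noteq> {}} \<inter> set_pmf (iterate_pmf (hp_step N p) S (L + 2 * L))"
    then have "S' \<subseteq> {1..N}"
      using pmf_kernel_invariant.set_pmf_iterate_pmf_invariant[OF hp_step_invariant S] by blast
    then show "S' \<in> {S'. 1 / tower a (2 * L) < potential S'}"
      using S' L_pos a by (auto intro!: potential_gt_inverse_tower)
  qed
  then have "emeasure (?M (3 * L)) {S'. unachieved N p S' \<noteq> {}}
      \<le> emeasure (?M (L + 2 * L)) {S'. 1 / tower a (2 * L) < potential S'}"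
    by (subst emeasure_Int_set_pmf[symmetric]) (simp add: emeasure_mono)
  also have "\<dots> \<le> emeasure (?M L) {S'. 1 / a < potential S'} + ennreal (real (2 * L) / W)"
    using S a W by (intro potential_above_tower) auto
  also have "\<dots> \<le> emeasure (?M L) {S'. 1 / a \<le> potential S'} + ennreal (2 / real L)"
    using L_pos by (intro add_mono emeasure_mono) (auto simp: W_def power2_eq_square)
  also have "\<dots> \<le> ennreal ((5/6) ^ L * real L * a) + ennreal (2 / real L)"
    using S few a by (intro add_right_mono potential_large_after_L) auto
  also have "\<dots> = ennreal (failure_bound L)"
    using a by (simp add: failure_bound_def a_def W_def powr_realpow ennreal_plus)
  finally show ?thesis .
qed

lemma prob_all_achieved_after_3L:
  "1 - failure_bound L \<le> measure_pmf.prob (hp_traj N p (n + 3 * L))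
     {xs. \<forall>j\<le>n. real (card (unachieved N p (xs ! j))) \<le> real p / real L
            \<longrightarrow> unachieved N p (xs ! (j + 3 * L)) = {}}"
proof -
  interpret pmf_kernel_invariant "hp_step N p" "\<lambda>S. S \<subseteq> {1..N}"
    by (rule hp_step_invariant)
  let ?M = "hp_traj N p (n + 3 * L)"
  let ?bad = "{xs. \<exists>j\<le>n. real (card (unachieved N p (xs ! j))) \<le> real p / real L
                      \<and> unachieved N p (xs ! (j + 3 * L)) \<noteq> {}}"
  have "emeasure (measure_pmf ?M) ?bad \<le> ennreal (failure_bound L)"
    unfolding hp_traj_eq_trajectory_pmf
  proof (rule emeasure_trajectory_pmf_first_hit)
    fix S S' assume "S \<subseteq> {1..N}" "S' \<in> set_pmf (hp_step N p S)" "unachieved N p S' \<noteq> {}"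
    then show "unachieved N p S \<noteq> {}"
      using unachieved_antimono[OF set_pmf_hp_step(1)] by blast
  next
    fix S assume "S \<subseteq> {1..N}" "real (card (unachieved N p S)) \<le> real p / real L"
    then show "emeasure (measure_pmf (iterate_pmf (hp_step N p) S (3 * L))) {S'. unachieved N p S' \<noteq> {}}
        \<le> ennreal (failure_bound L)"
      using L_pos by (intro all_achieved_within_3L) (auto simp: field_simps)
  qed simp
  then have "measure_pmf.prob ?M ?bad \<le> failure_bound L"
    using failure_bound_nonneg L_pos by (simp add: measure_pmf.emeasure_eq_measure)
  moreover have "measure_pmf.prob ?M (UNIV - ?bad) = 1 - measure_pmf.prob ?M ?bad"
    using measure_pmf.prob_compl[of ?bad ?M] by simp
  moreover have "UNIV - ?bad = {xs. \<forall>j\<le>n. real (card (unachieved N p (xs ! j))) \<le> real p / real L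
            \<longrightarrow> unachieved N p (xs ! (j + 3 * L)) = {}}"
    by auto
  ultimately show ?thesis
    by simp
qed

end

theorem lemma2p6:
  "\<exists>C::real. C > 0 \<and> (\<exists>\<delta>::nat \<Rightarrow> real. \<delta> \<longlonglongrightarrow> 0 \<and>
     (\<forall>p N n. 2 \<le> p \<longrightarrow> 0 < N \<longrightarrow> p dvd N \<longrightarrow>
        measure_pmf.prob (hp_traj N p (n + nat \<lceil>C * real (log_star (real p))\<rceil>))
          {xs. \<forall>j\<le>n. real (card (unachieved N p (xs ! j))) \<le> real p / real (log_star (real p))
                 \<longrightarrow> unachieved N p (xs ! (j + nat \<lceil>C * real (log_star (real p))\<rceil>)) = {}}
        \<ge> 1 - \<delta> p))"
proof (intro exI conjI allI impI)
  show "(3::real) > 0" by simp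
  show "(\<lambda>p. failure_bound (real (log_star (real p)))) \<longlonglongrightarrow> 0"
    using filterlim_compose[OF failure_bound_tendsto log_star_tendsto] .
  fix p N n :: nat
  assume "2 \<le> p" "0 < N" "p dvd N"
  then interpret histogram_partitioning N p "N div p"
    by unfold_locales (auto simp: dvd_def)
  have "3 * real (log_star (real p)) = real (3 * L)"
    by (simp add: L_def)
  then have "nat \<lceil>3 * real (log_star (real p))\<rceil> = 3 * L"
    by (simp only: ceiling_of_nat nat_int)
  then show "1 - failure_bound (real (log_star (real p))) \<le> measure_pmf.prob
      (hp_traj N p (n + nat \<lceil>3 * real (log_star (real p))\<rceil>))
      {xs. \<forall>j\<le>n. real (card (unachieved N p (xs ! j))) \<le> real p / real (log_star (real p))
             \<longrightarrow> unachieved N p (xs ! (j + nat \<lceil>3 * real (log_star (real p))\<rceil>)) = {}}"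
    using prob_all_achieved_after_3L[of n] by (simp add: L_def)
qed

end
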